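(* Let $C=L_1;\ldots;L_d$ be a sorting network of depth $d\ge2$ on $n$ channels containing no redundant comparators. Then every comparator $(i,j)\in L_{d-1}$ connects adjacent blocks of $C$; that is, every channel $m$ with $i<m<j$ belongs either to the block containing $i$ or to the block containing $j$.
   Context: Channels are numbered $1,\ldots,n$. A comparator network of depth $d$ is a sequence $C=L_1;\ldots;L_d$ of layers; each layer is a set of comparators $(i,j)$ with $1\le i<j\le n$, each channel occurring in at most one comparator of a layer. An input $\bar x\in\{0,1\}^n$ propagates: $\bar x_0=\bar x$, and $\bar x_k$ is obtained from $\bar x_{k-1}$ by, for each $(i,j)\in L_k$, putting the minimum of the values at positions $i,j$ at position $i$ and the maximum at position $j$. The output is $C(\bar x)=\bar x_d$; $C$ is a sorting network if $C(\bar x)$ is sorted non-decreasingly for all $\bar x\in\{0,1\}^n$. A comparator $(i,j)\in L_\ell$ is redundant if for every input $\bar x$ we have $(\bar x_{\ell-1})_i\le(\bar x_{\ell-1})_j$. The blocks of $C$ are the vertex sets of the connected components of the graph on $\{1,\ldots,n\}$ with an edge $\{i,j\}$ for each comparator $(i,j)$ in the last layer $L_d$. *)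

theory Defs
  imports Main
begin

text \<open>Channels are 1..n. A layer is a set of comparators (i,j); a network is a list of layers
  L_1 .. L_d (list index k-1 holds L_k).\<close>

type_synonym layer = "(nat \<times> nat) set"
type_synonym network = "layer list"

definition is_layer :: "nat \<Rightarrow> layer \<Rightarrow> bool" where
  "is_layer n L \<longleftrightarrow> (\<forall>(i,j)\<in>L. 1 \<le> i \<and> i < j \<and> j \<le> n) \<and>
     (\<forall>c\<in>L. \<forall>c'\<in>L. c \<noteq> c' \<longrightarrow> {fst c, snd c} \<inter> {fst c', snd c'} = {})"

definition is_network :: "nat \<Rightarrow> network \<Rightarrow> bool" where
  "is_network n C \<longleftrightarrow> (\<forall>L\<in>set C. is_layer n L)"

definition apply_layer :: "layer \<Rightarrow> (nat \<Rightarrow> nat) \<Rightarrow> (nat \<Rightarrow> nat)" where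
  "apply_layer L x = (\<lambda>p.
     if \<exists>j. (p, j) \<in> L then min (x p) (x (THE j. (p, j) \<in> L))
     else if \<exists>i. (i, p) \<in> L then max (x (THE i. (i, p) \<in> L)) (x p)
     else x p)"

definition state :: "network \<Rightarrow> nat \<Rightarrow> (nat \<Rightarrow> nat) \<Rightarrow> (nat \<Rightarrow> nat)" where
  "state C k x = fold apply_layer (take k C) x"

definition binary_input :: "nat \<Rightarrow> (nat \<Rightarrow> nat) \<Rightarrow> bool" where
  "binary_input n x \<longleftrightarrow> (\<forall>p\<in>{1..n}. x p \<in> {0, 1})"

definition sorting_network :: "nat \<Rightarrow> network \<Rightarrow> bool" where
  "sorting_network n C \<longleftrightarrow> is_network n C \<and>
     (\<forall>x. binary_input n x \<longrightarrow>
        (\<forall>p q. 1 \<le> p \<longrightarrow> p \<le> q \<longrightarrow> q \<le> n \<longrightarrow> state C (length C) x p \<le> state C (length C) x q))"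

text \<open>Comparator (i,j) in layer L_l (1-based l) is redundant.\<close>
definition redundant :: "nat \<Rightarrow> network \<Rightarrow> nat \<Rightarrow> nat \<times> nat \<Rightarrow> bool" where
  "redundant n C l c \<longleftrightarrow> (\<forall>x. binary_input n x \<longrightarrow>
      state C (l - 1) x (fst c) \<le> state C (l - 1) x (snd c))"

definition no_redundant :: "nat \<Rightarrow> network \<Rightarrow> bool" where
  "no_redundant n C \<longleftrightarrow> (\<forall>l\<in>{1..length C}. \<forall>c\<in>C ! (l - 1). \<not> redundant n C l c)"

definition last_edges :: "network \<Rightarrow> (nat \<times> nat) set" where
  "last_edges C = (let L = last C in L \<union> converse L)"

definition block :: "nat \<Rightarrow> network \<Rightarrow> nat \<Rightarrow> nat set" where
  "block n C i = {m \<in> {1..n}. (i, m) \<in> (last_edges C)\<^sup>*}"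

end

theory Submission
  imports Defs "HOL-Combinatorics.Transposition"
begin

text \<open>
  Removing the non-redundant comparator (i, j) from layer d - 1 leaves a network N that, for some
  input, puts a larger value on i than on j. Refine that input to an injective one and sort it by
  exchanging adjacent values: each exchange leaves the output of N unchanged or exchanges the same
  two values in it. The sorted input has the value at m strictly between those at i and j, so just
  before the exchange where this first happens the value at m lies outside their range; thresholding
  that input gives a 0/1 input on which N, and hence the first d - 1 layers of C, agree on i and j
  but differ at m.
  The same argument shows that the last layer only contains comparators (k, k + 1), and such a
  layer sorts the resulting inversion between m and i (or j) only if it compares them directly.
\<close>

abbreviation run :: "network \<Rightarrow> (nat \<Rightarrow> nat) \<Rightarrow> nat \<Rightarrow> nat" where
  "run N \<equiv> fold apply_layer N"

definition sorted_channels :: "nat \<Rightarrow> (nat \<Rightarrow> nat) \<Rightarrow> bool" where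
  "sorted_channels n x \<longleftrightarrow> (\<forall>p q. 1 \<le> p \<longrightarrow> p \<le> q \<longrightarrow> q \<le> n \<longrightarrow> x p \<le> x q)"

lemma is_layer_bounds:
  assumes "is_layer n L" "(p, q) \<in> L"
  shows "1 \<le> p" "p < q" "q \<le> n"
  using assms unfolding is_layer_def by auto

lemma is_layer_disjoint:
  assumes "is_layer n L" "c \<in> L" "c' \<in> L" "c \<noteq> c'"
  shows "{fst c, snd c} \<inter> {fst c', snd c'} = {}"
  using assms unfolding is_layer_def by blast

lemma is_layer_unique_upper:
  assumes "is_layer n L" "(p, q) \<in> L" "(p, q') \<in> L"
  shows "q' = q"
  using is_layer_disjoint[OF assms] by (cases "q = q'") auto

lemma is_layer_unique_lower:
  assumes "is_layer n L" "(p, q) \<in> L" "(p', q) \<in> L"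
  shows "p' = p"
  using is_layer_disjoint[OF assms] by (cases "p = p'") auto

lemma is_layer_not_lower_and_upper:
  assumes "is_layer n L" "(p, q) \<in> L"
  shows "(q', p) \<notin> L"
proof
  assume "(q', p) \<in> L"
  moreover have "(p, q) \<noteq> (q', p)" using is_layer_bounds[OF assms] by auto
  ultimately show False using is_layer_disjoint[OF assms(1,2), of "(q', p)"] by auto
qed

lemma is_layer_subset: "is_layer n L \<Longrightarrow> L' \<subseteq> L \<Longrightarrow> is_layer n L'"
  unfolding is_layer_def by blast

lemma apply_layer_lower:
  assumes "is_layer n L" "(p, q) \<in> L"
  shows "apply_layer L x p = min (x p) (x q)"
proof -
  have "(THE q'. (p, q') \<in> L) = q" using assms is_layer_unique_upper by blast
  then show ?thesis using assms unfolding apply_layer_def by auto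
qed

lemma apply_layer_upper:
  assumes "is_layer n L" "(p, q) \<in> L"
  shows "apply_layer L x q = max (x p) (x q)"
proof -
  have "\<nexists>q'. (q, q') \<in> L" using assms is_layer_not_lower_and_upper by blast
  moreover have "(THE p'. (p', q) \<in> L) = p" using assms is_layer_unique_lower by blast
  ultimately show ?thesis using assms unfolding apply_layer_def by auto
qed

lemma apply_layer_idle:
  assumes "\<forall>q. (p, q) \<notin> L \<and> (q, p) \<notin> L"
  shows "apply_layer L x p = x p"
  using assms unfolding apply_layer_def by auto

lemma comparator_cases:
  obtains (lower) q where "(p, q) \<in> L" | (upper) q where "(q, p) \<in> L"
    | (idle) "\<forall>q. (p, q) \<notin> L \<and> (q, p) \<notin> L"
  by blast

lemma apply_layer_comp_mono:
  assumes "mono f"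
  shows "apply_layer L (f \<circ> x) = f \<circ> apply_layer L x"
  by (rule ext) (simp add: apply_layer_def min_of_mono[OF assms] max_of_mono[OF assms])

lemma run_comp_mono:
  assumes "mono f"
  shows "run N (f \<circ> x) = f \<circ> run N x"
  by (induction N arbitrary: x) (simp_all add: apply_layer_comp_mono[OF assms])

lemma apply_layer_sorted:
  assumes "is_layer n L" "sorted_channels n x"
  shows "apply_layer L x = x"
proof
  fix p
  show "apply_layer L x p = x p"
  proof (cases p L rule: comparator_cases)
    case (lower q)
    then show ?thesis
      using apply_layer_lower[OF assms(1) lower] is_layer_bounds[OF assms(1) lower] assms(2)
      by (auto simp: sorted_channels_def)
  next
    case (upper q)
    then show ?thesis
      using apply_layer_upper[OF assms(1) upper] is_layer_bounds[OF assms(1) upper] assms(2)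
      by (auto simp: sorted_channels_def)
  qed (rule apply_layer_idle)
qed

lemma run_sorted:
  assumes "is_network n N" "sorted_channels n x"
  shows "run N x = x"
  using assms by (induction N) (auto simp: is_network_def apply_layer_sorted)

section \<open>Lowering one input value\<close>

lemma apply_layer_update_other:
  assumes L: "is_layer n L" and "s \<noteq> r" "(s, r) \<notin> L" "(r, s) \<notin> L"
  shows "apply_layer L (y(r := c)) s = apply_layer L y s"
proof (cases s L rule: comparator_cases)
  case (lower q)
  then have "q \<noteq> r" using assms by auto
  then show ?thesis using assms(2) by (simp add: apply_layer_lower[OF L lower])
next
  case (upper q)
  then have "q \<noteq> r" using assms by auto
  then show ?thesis using assms(2) by (simp add: apply_layer_upper[OF L upper])
qed (use assms(2) apply_layer_idle in auto)

lemma apply_layer_decrement_comparator: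
  assumes L: "is_layer n L" and c: "(p, q) \<in> L" and r: "r = p \<or> r = q" and y: "y r = Suc a"
  obtains r' where "r' = p \<or> r' = q" "apply_layer L y r' = Suc a"
    "apply_layer L (y(r := a)) = (apply_layer L y)(r' := a)"
proof -
  have "p < q" using is_layer_bounds[OF L c] by simp
  have other: "apply_layer L (y(r := a)) s = apply_layer L y s" if "s \<noteq> p" "s \<noteq> q" for s
  proof (rule apply_layer_update_other[OF L])
    show "s \<noteq> r" using r that by auto
    show "(s, r) \<notin> L"
      using r that is_layer_not_lower_and_upper[OF L c, of s] is_layer_unique_lower[OF L c, of s] by auto
    show "(r, s) \<notin> L"
      using r that is_layer_unique_upper[OF L c, of s] is_layer_not_lower_and_upper[OF L, of q s p] c
      by auto
  qed
  define r' where "r' = (if r = p then (if Suc a \<le> y q then p else q) else (if y p \<le> a then q else p))"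
  have pair: "apply_layer L y r' = Suc a \<and> apply_layer L (y(r := a)) s = ((apply_layer L y)(r' := a)) s"
    if "s = p \<or> s = q" for s
    using that r y \<open>p < q\<close> apply_layer_lower[OF L c, of y] apply_layer_lower[OF L c, of "y(r := a)"]
      apply_layer_upper[OF L c, of y] apply_layer_upper[OF L c, of "y(r := a)"]
    unfolding r'_def by (auto simp: min_def max_def)
  show ?thesis
  proof (rule that)
    show "r' = p \<or> r' = q" unfolding r'_def by auto
    then show "apply_layer L y r' = Suc a" using pair by blast
    show "apply_layer L (y(r := a)) = (apply_layer L y)(r' := a)"
    proof
      fix s
      show "apply_layer L (y(r := a)) s = ((apply_layer L y)(r' := a)) s"
        using pair[of s] other[of s] \<open>r' = p \<or> r' = q\<close> by (cases "s = p \<or> s = q") auto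
    qed
  qed
qed

lemma apply_layer_decrement:
  assumes L: "is_layer n L" and r: "r \<in> {1..n}" and y: "y r = Suc a"
  obtains r' where "r' \<in> {1..n}" "apply_layer L y r' = Suc a"
    "apply_layer L (y(r := a)) = (apply_layer L y)(r' := a)"
proof (cases r L rule: comparator_cases)
  case (lower q)
  obtain r' where r': "r' = r \<or> r' = q" "apply_layer L y r' = Suc a"
    "apply_layer L (y(r := a)) = (apply_layer L y)(r' := a)"
    using apply_layer_decrement_comparator[of n L r q r y a] L lower y by blast
  moreover have "r' \<in> {1..n}" using r'(1) is_layer_bounds[OF L lower] r by auto
  ultimately show ?thesis using that by blast
next
  case (upper q)
  obtain r' where r': "r' = q \<or> r' = r" "apply_layer L y r' = Suc a"
    "apply_layer L (y(r := a)) = (apply_layer L y)(r' := a)"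
    using apply_layer_decrement_comparator[of n L q r r y a] L upper y by blast
  moreover have "r' \<in> {1..n}" using r'(1) is_layer_bounds[OF L upper] r by auto
  ultimately show ?thesis using that by blast
next
  case idle
  have "apply_layer L (y(r := a)) = (apply_layer L y)(r := a)"
    using idle apply_layer_update_other[OF L, of _ r y a] by (auto simp: fun_eq_iff apply_layer_idle)
  with that show ?thesis using idle r y by (simp add: apply_layer_idle)
qed

lemma run_decrement:
  assumes "is_network n N" "r \<in> {1..n}" "y r = Suc a"
  obtains r' where "r' \<in> {1..n}" "run N y r' = Suc a" "run N (y(r := a)) = (run N y)(r' := a)"
proof -
  have "\<exists>r'\<in>{1..n}. run N y r' = Suc a \<and> run N (y(r := a)) = (run N y)(r' := a)"
    using assms
  proof (induction N arbitrary: y r)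
    case (Cons L N)
    have "is_layer n L" "is_network n N" using Cons.prems(1) by (auto simp: is_network_def)
    obtain r1 where r1: "r1 \<in> {1..n}" "apply_layer L y r1 = Suc a"
      and step: "apply_layer L (y(r := a)) = (apply_layer L y)(r1 := a)"
      using apply_layer_decrement[of n L r y a] \<open>is_layer n L\<close> Cons.prems(2,3) by blast
    show ?case
      using Cons.IH[of r1 "apply_layer L y", OF \<open>is_network n N\<close> r1] by (simp only: fold_Cons comp_apply step)
  qed auto
  then show ?thesis using that by blast
qed

section \<open>Injective inputs\<close>

lemma apply_layer_eq_comp_involution:
  assumes L: "is_layer n L"
  obtains \<sigma> where "\<And>p. \<sigma> (\<sigma> p) = p" "\<sigma> ` {1..n} \<subseteq> {1..n}" "apply_layer L y = y \<circ> \<sigma>"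
proof -
  define lower_swapped where "lower_swapped p \<longleftrightarrow> (\<exists>q. (p, q) \<in> L \<and> y q < y p)" for p
  define upper_swapped where "upper_swapped q \<longleftrightarrow> (\<exists>p. (p, q) \<in> L \<and> y q < y p)" for q
  \<comment> \<open>\<open>\<sigma> p\<close> is the channel whose value ends up at \<open>p\<close>\<close>
  define \<sigma> where "\<sigma> p = (if lower_swapped p then THE q. (p, q) \<in> L
    else if upper_swapped p then THE q. (q, p) \<in> L else p)" for p
  have \<sigma>_pair: "\<sigma> p = (if y q < y p then q else p) \<and> \<sigma> q = (if y q < y p then p else q)"
    if pq: "(p, q) \<in> L" for p q
  proof -
    have "(THE q'. (p, q') \<in> L) = q" "(THE p'. (p', q) \<in> L) = p"
      using pq is_layer_unique_upper[OF L] is_layer_unique_lower[OF L] by blast+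
    moreover have "lower_swapped p \<longleftrightarrow> y q < y p" "upper_swapped q \<longleftrightarrow> y q < y p"
      "\<not> upper_swapped p" "\<not> lower_swapped q"
      using pq is_layer_unique_upper[OF L] is_layer_unique_lower[OF L]
        is_layer_not_lower_and_upper[OF L pq] is_layer_not_lower_and_upper[OF L, of q _ p]
      unfolding lower_swapped_def upper_swapped_def by blast+
    ultimately show ?thesis unfolding \<sigma>_def by simp
  qed
  have \<sigma>_idle: "\<sigma> p = p" if "\<forall>q. (p, q) \<notin> L \<and> (q, p) \<notin> L" for p
    using that unfolding \<sigma>_def lower_swapped_def upper_swapped_def by auto
  have \<sigma>_spec: "apply_layer L y p = y (\<sigma> p) \<and> \<sigma> (\<sigma> p) = p \<and> (p \<in> {1..n} \<longrightarrow> \<sigma> p \<in> {1..n})" for p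
  proof (cases p L rule: comparator_cases)
    case (lower q)
    then show ?thesis
      using \<sigma>_pair[OF lower] apply_layer_lower[OF L lower, of y] is_layer_bounds[OF L lower] by auto
  next
    case (upper q)
    then show ?thesis
      using \<sigma>_pair[OF upper] apply_layer_upper[OF L upper, of y] is_layer_bounds[OF L upper] by auto
  qed (simp add: \<sigma>_idle apply_layer_idle)
  then have "\<sigma> ` {1..n} \<subseteq> {1..n}" "apply_layer L y = y \<circ> \<sigma>" by (auto simp: fun_eq_iff)
  with that show ?thesis using \<sigma>_spec by blast
qed

lemma apply_layer_inj_on:
  assumes L: "is_layer n L" and inj: "inj_on y {1..n}"
  shows "inj_on (apply_layer L y) {1..n}"
proof -
  obtain \<sigma> where "\<And>p. \<sigma> (\<sigma> p) = p" "\<sigma> ` {1..n} \<subseteq> {1..n}" "apply_layer L y = y \<circ> \<sigma>"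
    using apply_layer_eq_comp_involution[OF L] by blast
  moreover from this(1) have "inj_on \<sigma> {1..n}" by (metis inj_on_inverseI)
  ultimately show ?thesis using inj by (simp add: comp_inj_on inj_on_subset)
qed

lemma run_inj_on:
  assumes "is_network n N" "inj_on y {1..n}"
  shows "inj_on (run N y) {1..n}"
  using assms
proof (induction N arbitrary: y)
  case (Cons L N)
  then show ?case using apply_layer_inj_on[of n L y] by (simp add: is_network_def)
qed simp

lemma run_swap_adjacent_values:
  assumes N: "is_network n N" and inj: "inj_on w {1..n}"
    and p: "p \<in> {1..n}" and q: "q \<in> {1..n}" and wp: "w p = Suc a" and wq: "w q = a"
  shows "run N (w \<circ> transpose p q) = run N w \<or>
    (\<forall>s\<in>{1..n}. run N (w \<circ> transpose p q) s = transpose a (Suc a) (run N w s))"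
proof -
  define W where "W = run N w"
  define W' where "W' = run N (w \<circ> transpose p q)"
  have "p \<noteq> q" using wp wq by auto
  have lowered: "w(p := a) = (w \<circ> transpose p q)(q := a)"
    using \<open>p \<noteq> q\<close> wq by (auto simp: fun_eq_iff transpose_def)
  obtain r1 where r1: "r1 \<in> {1..n}" "W r1 = Suc a" "run N (w(p := a)) = W(r1 := a)"
    using run_decrement[of n N p w a] N p wp unfolding W_def by blast
  obtain r2 where r2: "r2 \<in> {1..n}" "W' r2 = Suc a"
    "run N ((w \<circ> transpose p q)(q := a)) = W'(r2 := a)"
    using run_decrement[OF N q, of "w \<circ> transpose p q" a] wp unfolding W'_def by auto
  have eq: "W(r1 := a) = W'(r2 := a)" using r1(3) r2(3) lowered by simp
  show ?thesis
  proof (cases "r1 = r2")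
    case True
    then have "W' = W" using eq r1(2) r2(2) by (metis fun_upd_triv fun_upd_upd)
    then show ?thesis unfolding W_def W'_def by simp
  next
    case False
    have "W r2 = a" "W' r1 = a"
      using fun_cong[OF eq, of r2] fun_cong[OF eq, of r1] False by auto
    have "W' s = transpose a (Suc a) (W s)" if "s \<in> {1..n}" for s
    proof -
      consider "s = r1" | "s = r2" | "s \<noteq> r1" "s \<noteq> r2" by blast
      then show ?thesis
      proof cases
        case 3
        have "W s \<noteq> a" "W s \<noteq> Suc a"
          using run_inj_on[OF N inj] that 3 r1 r2(1) \<open>W r2 = a\<close> unfolding W_def inj_on_def by metis+
        then show ?thesis using fun_cong[OF eq, of s] 3 by simp
      qed (use r1(2) r2(2) \<open>W r2 = a\<close> \<open>W' r1 = a\<close> in simp_all)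
    qed
    then show ?thesis unfolding W_def W'_def by blast
  qed
qed

section \<open>Sorting an injective input by exchanges of adjacent values\<close>

definition inversions :: "nat \<Rightarrow> (nat \<Rightarrow> nat) \<Rightarrow> (nat \<times> nat) set" where
  "inversions n v = {(p, q). 1 \<le> p \<and> p < q \<and> q \<le> n \<and> v q < v p}"

lemma finite_inversions: "finite (inversions n v)"
  by (rule finite_subset[of _ "{1..n} \<times> {1..n}"]) (auto simp: inversions_def)

lemma sorted_channels_if_no_inversions:
  assumes "inversions n v = {}"
  shows "sorted_channels n v"
  unfolding sorted_channels_def
proof (intro allI impI)
  fix p q assume "1 \<le> p" "p \<le> q" "q \<le> n"
  show "v p \<le> v q"
  proof (rule ccontr)
    assume "\<not> v p \<le> v q"
    then have "(p, q) \<in> inversions n v"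
      using \<open>1 \<le> p\<close> \<open>p \<le> q\<close> \<open>q \<le> n\<close> by (auto simp: inversions_def le_less)
    with assms show False by simp
  qed
qed

lemma exists_gap_free_inversion:
  assumes "inversions n v \<noteq> {}"
  obtains p q where "(p, q) \<in> inversions n v" "\<forall>s\<in>{1..n}. \<not> (v q < v s \<and> v s < v p)"
proof -
  obtain p q where pq: "(p, q) \<in> inversions n v"
    and least: "\<And>p' q'. (p', q') \<in> inversions n v \<Longrightarrow> v p - v q \<le> v p' - v q'"
    using ex_has_least_nat[of "\<lambda>c. c \<in> inversions n v" _ "\<lambda>(p, q). v p - v q"] assms
    by fastforce
  have "\<not> (v q < v s \<and> v s < v p)" if s: "s \<in> {1..n}" for s
  proof
    assume between: "v q < v s \<and> v s < v p"
    show False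
    proof (cases "p < s")
      case True
      then have "(p, s) \<in> inversions n v" using pq s between by (auto simp: inversions_def)
      then show False using least between by fastforce
    next
      case False
      then have "s < q" using pq between by (auto simp: inversions_def nat_neq_iff)
      then have "(s, q) \<in> inversions n v" using pq s between by (auto simp: inversions_def)
      then show False using least between by fastforce
    qed
  qed
  then show ?thesis using that pq by blast
qed

lemma exists_mono_closing_gap:
  fixes a b :: nat
  assumes "a < b" "\<forall>s\<in>A. \<not> (a < v s \<and> v s < b)"
  obtains g where "mono g" "g a = a" "g b = Suc a"
    "\<forall>s\<in>A. \<forall>t\<in>A. g (v s) < g (v t) \<longleftrightarrow> v s < v t"
proof -
  define g where "g u = (if u < b then min u a else u - (b - Suc a))" for u
  have "mono g" unfolding g_def mono_def using assms(1) by auto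
  moreover have "g a = a" "g b = Suc a" unfolding g_def using assms(1) by auto
  moreover have "g (v s) < g (v t) \<longleftrightarrow> v s < v t" if "s \<in> A" "t \<in> A" for s t
  proof -
    have "v s \<le> a \<or> b \<le> v s" "v t \<le> a \<or> b \<le> v t" using assms(2) that by auto
    then show ?thesis unfolding g_def using assms(1) by auto
  qed
  ultimately show ?thesis using that by blast
qed

lemma exists_mono_making_inversion_adjacent:
  assumes inj: "inj_on v {1..n}" and "inversions n v \<noteq> {}"
  obtains g p q a where "mono g" "inj_on (g \<circ> v) {1..n}" "inversions n (g \<circ> v) = inversions n v"
    "(p, q) \<in> inversions n v" "g (v p) = Suc a" "g (v q) = a"
proof -
  obtain p q where pq: "(p, q) \<in> inversions n v" and gap: "\<forall>s\<in>{1..n}. \<not> (v q < v s \<and> v s < v p)"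
    using exists_gap_free_inversion[OF assms(2)] by blast
  then have "v q < v p" by (simp add: inversions_def)
  then obtain g where g: "mono g" "g (v q) = v q" "g (v p) = Suc (v q)"
    and g_iff: "\<forall>s\<in>{1..n}. \<forall>t\<in>{1..n}. g (v s) < g (v t) \<longleftrightarrow> v s < v t"
    using exists_mono_closing_gap[OF _ gap] by blast
  have "inj_on (g \<circ> v) {1..n}"
    using g_iff inj_onD[OF inj] unfolding inj_on_def by (metis comp_apply nat_neq_iff)
  moreover have "inversions n (g \<circ> v) = inversions n v"
    using g_iff unfolding inversions_def by auto
  ultimately show ?thesis using that g pq by blast
qed

lemma inversions_swap_adjacent_values:
  assumes inj: "inj_on w {1..n}" and pq: "(p, q) \<in> inversions n w"
    and wp: "w p = Suc a" and wq: "w q = a"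
  shows "inversions n (w \<circ> transpose p q) \<subset> inversions n w"
proof -
  have p: "p \<in> {1..n}" and q: "q \<in> {1..n}" and "p < q" using pq by (auto simp: inversions_def)
  have other: "w s \<noteq> a" "w s \<noteq> Suc a" if "s \<in> {1..n}" "s \<noteq> p" "s \<noteq> q" for s
    using inj p q that wp wq unfolding inj_on_def by metis+
  have "inversions n (w \<circ> transpose p q) \<subseteq> inversions n w - {(p, q)}"
  proof
    fix c assume "c \<in> inversions n (w \<circ> transpose p q)"
    then obtain s t where c: "c = (s, t)" "1 \<le> s" "s < t" "t \<le> n"
      and inv: "w (transpose p q t) < w (transpose p q s)"
      by (auto simp: inversions_def)
    have "w t < w s \<and> (s, t) \<noteq> (p, q)"
      using inv other[of s] other[of t] c \<open>p < q\<close> wp wq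
      by (auto simp: transpose_def split: if_splits)
    then show "c \<in> inversions n w - {(p, q)}" using c by (auto simp: inversions_def)
  qed
  then show ?thesis using pq by blast
qed

lemma middle_after_adjacent_transposition:
  fixes x y z a :: nat
  assumes "transpose a (Suc a) x < transpose a (Suc a) y"
    "transpose a (Suc a) y < transpose a (Suc a) z" "\<not> (x < y \<and> y < z)"
  shows "y < min x z \<or> max x z < y"
  using assms by (auto simp: transpose_def split: if_splits)

lemma exchange_adjacent_values_step:
  assumes N: "is_network n N" and channels: "1 \<le> i" "i < m" "m < j" "j \<le> n"
    and inj: "inj_on v {1..n}" and "inversions n v \<noteq> {}"
    and not_between: "\<not> (run N v i < run N v m \<and> run N v m < run N v j)"
  obtains (fewer_inversions) v' where "inj_on v' {1..n}" "card (inversions n v') < card (inversions n v)"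
      "\<not> (run N v' i < run N v' m \<and> run N v' m < run N v' j)"
    | (middle_outside) w where
      "run N w m < min (run N w i) (run N w j) \<or> max (run N w i) (run N w j) < run N w m"
proof -
  obtain g p q a where "mono g" and inj_gv: "inj_on (g \<circ> v) {1..n}"
    and inversions_gv: "inversions n (g \<circ> v) = inversions n v" and pq: "(p, q) \<in> inversions n v"
    and "g (v p) = Suc a" "g (v q) = a"
    by (rule exists_mono_making_inversion_adjacent[OF inj \<open>inversions n v \<noteq> {}\<close>])
  define w where "w = g \<circ> v"
  have inj_w: "inj_on w {1..n}" and inversions_w: "inversions n w = inversions n v"
    and wp: "w p = Suc a" and wq: "w q = a"
    using inj_gv inversions_gv \<open>g (v p) = Suc a\<close> \<open>g (v q) = a\<close> by (simp_all add: w_def)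
  have not_between_w: "\<not> (run N w i < run N w m \<and> run N w m < run N w j)"
    using not_between run_comp_mono[OF \<open>mono g\<close>, of N v] mono_strict_invE[OF \<open>mono g\<close>]
    unfolding w_def by (metis comp_apply)
  have p: "p \<in> {1..n}" and q: "q \<in> {1..n}" using pq by (auto simp: inversions_def)
  define w' where "w' = w \<circ> transpose p q"
  have inj_w': "inj_on w' {1..n}" unfolding w'_def using p q inj_w by (simp add: comp_inj_on)
  have "inversions n w' \<subset> inversions n v"
    using inversions_swap_adjacent_values[OF inj_w] pq wp wq inversions_w unfolding w'_def by simp
  then have fewer: "card (inversions n w') < card (inversions n v)"
    by (simp add: psubset_card_mono finite_inversions)
  show ?thesis
  proof (cases "run N w' i < run N w' m \<and> run N w' m < run N w' j")
    case False
    then show ?thesis using fewer_inversions[OF inj_w' fewer] by blast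
  next
    case True
    then have "run N w' \<noteq> run N w" using not_between_w by auto
    then have "\<forall>s\<in>{1..n}. run N w' s = transpose a (Suc a) (run N w s)"
      using run_swap_adjacent_values[OF N inj_w p q wp wq] unfolding w'_def by blast
    then have "transpose a (Suc a) (run N w i) < transpose a (Suc a) (run N w m)"
      "transpose a (Suc a) (run N w m) < transpose a (Suc a) (run N w j)"
      using True channels by auto
    from middle_after_adjacent_transposition[OF this not_between_w] show ?thesis
      by (rule middle_outside)
  qed
qed

lemma exists_input_middle_outside:
  assumes N: "is_network n N" and channels: "1 \<le> i" "i < m" "m < j" "j \<le> n"
    and inj: "inj_on v {1..n}"
    and not_between: "\<not> (run N v i < run N v m \<and> run N v m < run N v j)"
  shows "\<exists>w. run N w m < min (run N w i) (run N w j) \<or> max (run N w i) (run N w j) < run N w m"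
  using inj not_between
proof (induction "card (inversions n v)" arbitrary: v rule: less_induct)
  case less
  show ?case
  proof (cases "inversions n v = {}")
    case True
    then have sorted: "sorted_channels n v" by (rule sorted_channels_if_no_inversions)
    then have "v i \<le> v m" "v m \<le> v j" using channels by (auto simp: sorted_channels_def)
    moreover have "v i \<noteq> v m" "v m \<noteq> v j"
      using inj_onD[OF less.prems(1), of i m] inj_onD[OF less.prems(1), of m j] channels by auto
    ultimately show ?thesis using less.prems(2) run_sorted[OF N sorted] by simp
  next
    case False
    show ?thesis
      by (rule exchange_adjacent_values_step[OF N channels less.prems(1) False less.prems(2)])
        (use less.hyps in blast)+
  qed
qed

section \<open>Binary witnesses\<close>

lemma exists_injective_refinement:
  fixes x :: "nat \<Rightarrow> nat"
  obtains v f :: "nat \<Rightarrow> nat" where "inj_on v {1..n}" "mono f" "x = f \<circ> v"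
proof
  show "inj_on (\<lambda>s. x s * Suc n + s mod Suc n) {1..n}"
  proof (rule inj_onI)
    fix s t assume "s \<in> {1..n}" "t \<in> {1..n}" "x s * Suc n + s mod Suc n = x t * Suc n + t mod Suc n"
    then show "s = t" by (metis mod_less mod_mult_self3 atLeastAtMost_iff le_imp_less_Suc)
  qed
  show "mono (\<lambda>u. u div Suc n)" by (simp add: mono_def div_le_mono)
  show "x = (\<lambda>u. u div Suc n) \<circ> (\<lambda>s. x s * Suc n + s mod Suc n)"
  proof
    fix s
    have "(s mod Suc n + x s * Suc n) div Suc n = x s" by (subst div_mult_self1) simp_all
    then show "x s = ((\<lambda>u. u div Suc n) \<circ> (\<lambda>s. x s * Suc n + s mod Suc n)) s"
      by (simp only: comp_apply add.commute)
  qed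
qed

lemma run_threshold:
  "run N (\<lambda>s. if t \<le> w s then 1 else 0) = (\<lambda>s. if t \<le> run N w s then 1 else 0)"
proof -
  have "mono (\<lambda>u::nat. if t \<le> u then 1 else 0 :: nat)" by (simp add: mono_def)
  from run_comp_mono[OF this, of N w] show ?thesis by (simp add: comp_def)
qed

lemma exists_binary_input_equal_ends:
  assumes N: "is_network n N" and channels: "1 \<le> i" "i < m" "m < j" "j \<le> n"
    and inverted: "run N x j < run N x i"
  shows "\<exists>x'. binary_input n x' \<and> run N x' i = run N x' j \<and> run N x' m \<noteq> run N x' i"
proof -
  obtain v f :: "nat \<Rightarrow> nat" where "inj_on v {1..n}" "mono f" "x = f \<circ> v"
    by (rule exists_injective_refinement)
  then have "run N x = f \<circ> run N v" using run_comp_mono by blast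
  then have "\<not> run N v i \<le> run N v j" using inverted monoD[OF \<open>mono f\<close>] by fastforce
  then have "\<not> (run N v i < run N v m \<and> run N v m < run N v j)" by linarith
  then obtain w where w: "run N w m < min (run N w i) (run N w j) \<or>
      max (run N w i) (run N w j) < run N w m"
    using exists_input_middle_outside[OF N channels \<open>inj_on v {1..n}\<close>] by blast
  define t where "t = (if run N w m < min (run N w i) (run N w j) then Suc (run N w m) else run N w m)"
  let ?x' = "\<lambda>s. if t \<le> w s then 1 else 0"
  have "binary_input n ?x'" by (simp add: binary_input_def)
  moreover have "run N ?x' i = run N ?x' j \<and> run N ?x' m \<noteq> run N ?x' i"
    using w unfolding run_threshold t_def by auto
  ultimately show ?thesis by blast
qed

section \<open>Non-redundant comparators\<close>

lemma state_Suc: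
  "k < length C \<Longrightarrow> state C (Suc k) x = apply_layer (C ! k) (state C k x)"
  by (simp add: state_def take_Suc_conv_app_nth)

lemma sorting_network_sorted_output:
  "sorting_network n C \<Longrightarrow> binary_input n x \<Longrightarrow> sorted_channels n (state C (length C) x)"
  unfolding sorting_network_def sorted_channels_def by simp

lemma no_redundant_layer:
  assumes "no_redundant n C" "k < length C" "c \<in> C ! k"
  shows "\<not> redundant n C (Suc k) c"
proof -
  have "Suc k \<in> {1..length C}" using assms(2) by simp
  then show ?thesis using assms(1,3) unfolding no_redundant_def by (metis diff_Suc_1)
qed

lemma apply_layer_remove_comparator_ends:
  assumes L: "is_layer n L" and c: "(i, j) \<in> L"
  shows "apply_layer (L - {(i, j)}) y i = y i" "apply_layer (L - {(i, j)}) y j = y j"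
proof -
  have "\<forall>q. (i, q) \<notin> L - {(i, j)} \<and> (q, i) \<notin> L - {(i, j)}"
    using is_layer_unique_upper[OF L c] is_layer_not_lower_and_upper[OF L c] by blast
  then show "apply_layer (L - {(i, j)}) y i = y i" by (rule apply_layer_idle)
  have "\<forall>q. (j, q) \<notin> L - {(i, j)} \<and> (q, j) \<notin> L - {(i, j)}"
    using is_layer_unique_lower[OF L c] is_layer_not_lower_and_upper[OF L, of j _ i] c by blast
  then show "apply_layer (L - {(i, j)}) y j = y j" by (rule apply_layer_idle)
qed

lemma apply_layer_remove_comparator_other:
  assumes L: "is_layer n L" and c: "(i, j) \<in> L" and "s \<noteq> i" "s \<noteq> j"
  shows "apply_layer (L - {(i, j)}) y s = apply_layer L y s"
proof -
  have L': "is_layer n (L - {(i, j)})" using is_layer_subset[OF L] by blast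
  show ?thesis
  proof (cases s L rule: comparator_cases)
    case (lower q)
    then have "(s, q) \<in> L - {(i, j)}" using \<open>s \<noteq> i\<close> by auto
    then show ?thesis by (simp add: apply_layer_lower[OF L lower] apply_layer_lower[OF L'])
  next
    case (upper q)
    then have "(q, s) \<in> L - {(i, j)}" using \<open>s \<noteq> j\<close> by auto
    then show ?thesis by (simp add: apply_layer_upper[OF L upper] apply_layer_upper[OF L'])
  next
    case idle
    then show ?thesis by (simp add: apply_layer_idle)
  qed
qed

lemma apply_layer_remove_comparator_equal:
  assumes L: "is_layer n L" and c: "(i, j) \<in> L" and eq: "y i = y j"
  shows "apply_layer (L - {(i, j)}) y = apply_layer L y"
proof
  fix s
  show "apply_layer (L - {(i, j)}) y s = apply_layer L y s"
    using apply_layer_remove_comparator_ends[OF L c, of y] apply_layer_lower[OF L c, of y]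
      apply_layer_upper[OF L c, of y] apply_layer_remove_comparator_other[OF L c, of s y] eq
    by (cases "s = i \<or> s = j") auto
qed

lemma nonredundant_comparator_witness:
  assumes C: "is_network n C" and k: "k < length C" and c: "(i, j) \<in> C ! k"
    and nonredundant: "\<not> redundant n C (Suc k) (i, j)" and "i < m" "m < j"
  shows "\<exists>x. binary_input n x \<and> state C (Suc k) x i = state C (Suc k) x j
    \<and> state C (Suc k) x m \<noteq> state C (Suc k) x i"
proof -
  have L: "is_layer n (C ! k)" using C k by (simp add: is_network_def)
  note bounds = is_layer_bounds[OF L c]
  \<comment> \<open>on inputs whose state agrees at \<open>i\<close> and \<open>j\<close>, \<open>N\<close> computes \<open>state C (Suc k)\<close>\<close>
  define N where "N = take k C @ [C ! k - {(i, j)}]"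
  have N: "is_network n N"
    using C is_layer_subset[OF L] unfolding N_def is_network_def by (auto dest: in_set_takeD)
  have run_N: "run N y = apply_layer (C ! k - {(i, j)}) (state C k y)" for y
    by (simp add: N_def state_def)
  obtain x where "binary_input n x" "state C k x j < state C k x i"
    using nonredundant unfolding redundant_def by auto
  then have "run N x j < run N x i"
    unfolding run_N apply_layer_remove_comparator_ends[OF L c] by simp
  then obtain x' where x': "binary_input n x'" "run N x' i = run N x' j" "run N x' m \<noteq> run N x' i"
    using exists_binary_input_equal_ends[OF N bounds(1) \<open>i < m\<close> \<open>m < j\<close> bounds(3)] by blast
  have "state C (Suc k) x' = run N x'"
    using x'(2) apply_layer_remove_comparator_equal[OF L c]
    unfolding state_Suc[OF k] run_N apply_layer_remove_comparator_ends[OF L c] by simp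
  then show ?thesis using x' by auto
qed

section \<open>The last layer\<close>

lemma apply_layer_value_moves_up:
  assumes L: "is_layer n L"
  obtains p where "z s \<le> apply_layer L z p" "p = s \<or> (s, p) \<in> L"
proof (cases s L rule: comparator_cases)
  case (lower q)
  then show ?thesis using that[of q] apply_layer_upper[OF L lower, of z] by simp
next
  case (upper q)
  then show ?thesis using that[of s] apply_layer_upper[OF L upper, of z] by simp
next
  case idle
  then show ?thesis using that[of s] apply_layer_idle[OF idle, of z] by simp
qed

lemma apply_layer_value_moves_down:
  assumes L: "is_layer n L"
  obtains q where "apply_layer L z q \<le> z t" "q = t \<or> (q, t) \<in> L"
proof (cases t L rule: comparator_cases)
  case (lower q)
  then show ?thesis using that[of t] apply_layer_lower[OF L lower, of z] by simp
next
  case (upper q)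
  then show ?thesis using that[of q] apply_layer_lower[OF L upper, of z] by simp
next
  case idle
  then show ?thesis using that[of t] apply_layer_idle[OF idle, of z] by simp
qed

lemma adjacent_layer_sorts_only_compared_pairs:
  assumes L: "is_layer n L" and adjacent: "\<And>k l. (k, l) \<in> L \<Longrightarrow> l = Suc k"
    and sorted: "sorted_channels n (apply_layer L z)"
    and "1 \<le> s" "s < t" "t \<le> n" and inverted: "z t < z s"
  shows "(s, t) \<in> L"
proof (rule ccontr)
  assume not_compared: "(s, t) \<notin> L"
  obtain p where p: "z s \<le> apply_layer L z p" "p = s \<or> (s, p) \<in> L"
    using apply_layer_value_moves_up[OF L, of z s] by blast
  obtain q where q: "apply_layer L z q \<le> z t" "q = t \<or> (q, t) \<in> L"
    using apply_layer_value_moves_down[OF L, of z t] by blast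
  have p_cases: "p = s \<or> p = Suc s" and q_cases: "q = t \<or> Suc q = t"
    using p(2) q(2) adjacent by auto
  have "p \<le> q"
  proof (rule ccontr)
    assume "\<not> p \<le> q"
    then have "p = Suc s" "t = Suc s" using p_cases q_cases \<open>s < t\<close> by auto
    then show False using p(2) not_compared by auto
  qed
  moreover have "1 \<le> p" "q \<le> n" using p_cases q_cases \<open>1 \<le> s\<close> \<open>s < t\<close> \<open>t \<le> n\<close> by auto
  ultimately have "apply_layer L z p \<le> apply_layer L z q"
    using sorted unfolding sorted_channels_def by blast
  then show False using p(1) q(1) inverted by linarith
qed

lemma last_layer_adjacent:
  assumes sorting: "sorting_network n C" and nonredundant: "no_redundant n C"
    and "C \<noteq> []" and c: "(k, l) \<in> last C"
  shows "l = Suc k"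
proof (rule ccontr)
  assume "l \<noteq> Suc k"
  define d where "d = length C - 1"
  have C: "is_network n C" using sorting by (simp add: sorting_network_def)
  have "d < length C" "Suc d = length C" and last: "last C = C ! d"
    using \<open>C \<noteq> []\<close> by (simp_all add: d_def last_conv_nth)
  have "is_layer n (last C)" using C \<open>C \<noteq> []\<close> by (simp add: is_network_def)
  then have "1 \<le> k" "k < l" "l \<le> n" using is_layer_bounds[OF _ c] by blast+
  with \<open>l \<noteq> Suc k\<close> have "Suc k < l" by simp
  then obtain x where "binary_input n x" "state C (Suc d) x k = state C (Suc d) x l"
    "state C (Suc d) x (Suc k) \<noteq> state C (Suc d) x k"
    using nonredundant_comparator_witness[OF C \<open>d < length C\<close> c[unfolded last]
        no_redundant_layer[OF nonredundant \<open>d < length C\<close> c[unfolded last]] lessI \<open>Suc k < l\<close>]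
    by blast
  moreover have "sorted_channels n (state C (Suc d) x)"
    using sorting_network_sorted_output[OF sorting \<open>binary_input n x\<close>] \<open>Suc d = length C\<close> by simp
  then have "state C (Suc d) x k \<le> state C (Suc d) x (Suc k)"
    "state C (Suc d) x (Suc k) \<le> state C (Suc d) x l"
    using \<open>1 \<le> k\<close> \<open>Suc k < l\<close> \<open>l \<le> n\<close> unfolding sorted_channels_def by simp_all
  ultimately show False by simp
qed

lemma sorting_network_last_layer_inversion:
  assumes sorting: "sorting_network n C" and nonredundant: "no_redundant n C" and "C \<noteq> []"
    and x: "binary_input n x" and "1 \<le> s" "s < t" "t \<le> n"
    and inverted: "state C (length C - 1) x t < state C (length C - 1) x s"
  shows "(s, t) \<in> last C"
proof -
  have L: "is_layer n (last C)" using sorting \<open>C \<noteq> []\<close> by (simp add: sorting_network_def is_network_def)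
  have "state C (length C) x = apply_layer (last C) (state C (length C - 1) x)"
    using state_Suc[of "length C - 1" C x] \<open>C \<noteq> []\<close> by (simp add: last_conv_nth)
  then have "sorted_channels n (apply_layer (last C) (state C (length C - 1) x))"
    using sorting_network_sorted_output[OF sorting x] by simp
  then show ?thesis
    using adjacent_layer_sorts_only_compared_pairs[OF L
        last_layer_adjacent[OF sorting nonredundant \<open>C \<noteq> []\<close>] _ assms(5-8)] by blast
qed

lemma last_comparator_in_block:
  assumes "(p, q) \<in> last C" "p \<in> {1..n}" "q \<in> {1..n}"
  shows "q \<in> block n C p" "p \<in> block n C q"
  using assms by (auto simp: block_def last_edges_def Let_def)

theorem lemma5:
  fixes n :: nat and C :: network
  assumes "sorting_network n C"
    and "length C \<ge> 2"
    and "no_redundant n C"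
    and "(i, j) \<in> C ! (length C - 2)"
    and "i < m" and "m < j"
  shows "m \<in> block n C i \<or> m \<in> block n C j"
proof -
  define k where "k = length C - 2"
  have C: "is_network n C" using assms(1) by (simp add: sorting_network_def)
  have "k < length C" "C \<noteq> []" "Suc k = length C - 1" using assms(2) by (auto simp: k_def)
  have c: "(i, j) \<in> C ! k" using assms(4) by (simp add: k_def)
  have channels: "1 \<le> i" "i \<le> n" "1 \<le> m" "m \<le> n" "1 \<le> j" "j \<le> n"
    using is_layer_bounds[of n "C ! k" i j] C \<open>k < length C\<close> c assms(5,6)
    by (auto simp: is_network_def)
  obtain x where x: "binary_input n x" and z: "state C (Suc k) x i = state C (Suc k) x j"
    "state C (Suc k) x m \<noteq> state C (Suc k) x i"
    using nonredundant_comparator_witness[OF C \<open>k < length C\<close> c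
        no_redundant_layer[OF assms(3) \<open>k < length C\<close> c] assms(5,6)] by blast
  note last_inversion = sorting_network_last_layer_inversion[OF assms(1,3) \<open>C \<noteq> []\<close> x]
  consider "state C (Suc k) x m < state C (Suc k) x i" | "state C (Suc k) x j < state C (Suc k) x m"
    using z by linarith
  then show ?thesis
  proof cases
    case 1
    then have "(i, m) \<in> last C" using last_inversion \<open>Suc k = length C - 1\<close> channels assms(5) by simp
    then show ?thesis using last_comparator_in_block(1) channels by simp
  next
    case 2
    then have "(m, j) \<in> last C" using last_inversion \<open>Suc k = length C - 1\<close> channels assms(6) by simp
    then show ?thesis using last_comparator_in_block(2) channels by simp
  qed
qed

end
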